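(* Let $\mathbb{A}$ be a medial algebra over a field $\mathbb{K}$ of characteristic not $2,3$, and let $c$ be a nonzero idempotent of $\mathbb{A}$. Then: (a) $L_c(xy)=L_c(x)L_c(y)$ for all $x,y\in\mathbb{A}$, i.e. $L_c$ is an algebra endomorphism; (b) $\mathbb{A}_c(0)=\ker L_c$ is an ideal of $\mathbb{A}$; (c) $L_c(\mathbb{A})$ is a subalgebra of $\mathbb{A}$; (d) $\mathbb{A}_c(1)=\{x: cx=x\}$ is a subalgebra of $L_c(\mathbb{A})$ and $\dim\mathbb{A}_c(1)\ge 1$; (e) for any nonzero idempotents $c_1,c_2$ of $\mathbb{A}$, $L_{c_2}L_{c_1}=L_{c_2c_1}L_{c_2}$.
   Context: All algebras are commutative, possibly nonassociative, finite-dimensional. Medial: $(xy)(zw)=(xz)(yw)$ for all $x,y,z,w\in\mathbb{A}$. $L_y:x\mapsto yx$. $\mathbb{A}_c(\lambda)$ denotes the $\lambda$-eigenspace of $L_c$. *)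

theory Defs
  imports Main "HOL.Vector_Spaces"
begin

text \<open>Bilinearity of mult: linear in the second argument for each fixed first argument,
  which together with commutativity gives bilinearity.\<close>
definition comm_fd_algebra :: "('k::field \<Rightarrow> 'v::ab_group_add \<Rightarrow> 'v) \<Rightarrow> ('v \<Rightarrow> 'v \<Rightarrow> 'v) \<Rightarrow> bool" where
  "comm_fd_algebra smul mult \<longleftrightarrow>
     vector_space smul \<and>
     (\<exists>B. finite B \<and> module.span smul B = UNIV) \<and>
     (\<forall>x. Vector_Spaces.linear smul smul (mult x)) \<and>
     (\<forall>x y. mult x y = mult y x)"

definition medial :: "('v \<Rightarrow> 'v \<Rightarrow> 'v) \<Rightarrow> bool" where
  "medial mult \<longleftrightarrow> (\<forall>x y z w. mult (mult x y) (mult z w) = mult (mult x z) (mult y w))"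

definition idempotent_elt :: "('v \<Rightarrow> 'v \<Rightarrow> 'v) \<Rightarrow> 'v \<Rightarrow> bool" where
  "idempotent_elt mult c \<longleftrightarrow> mult c c = c"

definition eigenspace_L :: "('k \<Rightarrow> 'v \<Rightarrow> 'v) \<Rightarrow> ('v \<Rightarrow> 'v \<Rightarrow> 'v) \<Rightarrow> 'v \<Rightarrow> 'k \<Rightarrow> 'v set" where
  "eigenspace_L smul mult c lam = {x. mult c x = smul lam x}"

definition subalgebra :: "('k::field \<Rightarrow> 'v::ab_group_add \<Rightarrow> 'v) \<Rightarrow> ('v \<Rightarrow> 'v \<Rightarrow> 'v) \<Rightarrow> 'v set \<Rightarrow> bool" where
  "subalgebra smul mult S \<longleftrightarrow> module.subspace smul S \<and> (\<forall>x\<in>S. \<forall>y\<in>S. mult x y \<in> S)"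

definition ideal_alg :: "('k::field \<Rightarrow> 'v::ab_group_add \<Rightarrow> 'v) \<Rightarrow> ('v \<Rightarrow> 'v \<Rightarrow> 'v) \<Rightarrow> 'v set \<Rightarrow> bool" where
  "ideal_alg smul mult I \<longleftrightarrow> module.subspace smul I \<and>
     (\<forall>a x. x \<in> I \<longrightarrow> mult a x \<in> I \<and> mult x a \<in> I)"

end

theory Submission
  imports Defs
begin

text \<open>Mediality with \<open>c c = c\<close> gives \<open>c (x y) = (c c)(x y) = (c x)(c y)\<close> and
  \<open>c\<^sub>2 (c\<^sub>1 x) = (c\<^sub>2 c\<^sub>2)(c\<^sub>1 x) = (c\<^sub>2 c\<^sub>1)(c\<^sub>2 x)\<close>. Hence \<open>L\<^sub>c\<close> is a linear
  multiplicative map, and parts (b)-(d) are general facts about algebra endomorphisms: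
  the kernel is an ideal, the image and the fixed points are subalgebras.\<close>

lemma medial_idempotent_left_mult_hom:
  assumes "medial mult" and "idempotent_elt mult c"
  shows "mult c (mult x y) = mult (mult c x) (mult c y)"
  using assms unfolding medial_def idempotent_elt_def by metis

lemma medial_idempotent_left_mult_comp:
  assumes "medial mult" and "idempotent_elt mult c2"
  shows "mult c2 (mult c1 x) = mult (mult c2 c1) (mult c2 x)"
  using assms unfolding medial_def idempotent_elt_def by metis

lemma comm_fd_algebra_finite_dimensional:
  assumes "comm_fd_algebra smul mult"
  obtains B where "finite_dimensional_vector_space smul B"
proof -
  interpret vector_space smul
    using assms unfolding comm_fd_algebra_def by blast
  obtain S where "finite S" "span S = UNIV"
    using assms unfolding comm_fd_algebra_def by blast
  obtain B where "independent B" "B \<subseteq> S" "S \<subseteq> span B"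
    using maximal_independent_subset[of S] by blast
  then have "span S \<subseteq> span B"
    using span_minimal subspace_span by blast
  with \<open>span S = UNIV\<close> have "span B = UNIV"
    by blast
  moreover have "finite B"
    using \<open>B \<subseteq> S\<close> \<open>finite S\<close> finite_subset by blast
  ultimately show thesis
    using \<open>independent B\<close> by (intro that) unfold_locales
qed

lemma (in finite_dimensional_vector_space) dim_ge_1_if_nonzero_mem:
  assumes "v \<in> S" and "v \<noteq> 0"
  shows "1 \<le> dim S"
proof -
  from assms have "\<not> S \<subseteq> {0}"
    by blast
  then have "dim S \<noteq> 0"
    by (simp only: dim_eq_0 not_False_eq_True)
  then show ?thesis
    by linarith
qed

lemma subspace_fixed_points:
  assumes "Vector_Spaces.linear smul smul f"
  shows "module.subspace smul {x. f x = x}"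
proof -
  interpret linear smul smul f by fact
  show ?thesis
    by (simp add: vs1.subspace_def add scale)
qed

lemma ideal_alg_kernel_hom:
  assumes alg: "comm_fd_algebra smul mult"
    and lin: "Vector_Spaces.linear smul smul f"
    and hom: "\<And>x y. f (mult x y) = mult (f x) (f y)"
  shows "ideal_alg smul mult {x. f x = 0}"
proof -
  have lin_mult: "\<And>a. Vector_Spaces.linear smul smul (mult a)"
    and comm: "\<And>a b. mult a b = mult b a"
    using alg unfolding comm_fd_algebra_def by blast+
  interpret linear smul smul f by fact
  have mult_0: "mult a 0 = 0" for a
  proof -
    interpret mult_a: linear smul smul "mult a" by (rule lin_mult)
    show ?thesis by (rule mult_a.zero)
  qed
  have "f (mult a x) = 0" if "f x = 0" for a x
    using that by (simp add: hom mult_0)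
  then have "mult a x \<in> {x. f x = 0} \<and> mult x a \<in> {x. f x = 0}" if "f x = 0" for a x
    using that comm[of x a] by simp
  then show ?thesis
    unfolding ideal_alg_def using subspace_kernel by blast
qed

lemma subalgebra_range_hom:
  assumes lin: "Vector_Spaces.linear smul smul f"
    and hom: "\<And>x y. f (mult x y) = mult (f x) (f y)"
  shows "subalgebra smul mult (range f)"
proof -
  interpret linear smul smul f by fact
  have "mult (f a) (f b) \<in> range f" for a b
    by (metis hom rangeI)
  then show ?thesis
    unfolding subalgebra_def using subspace_image[OF vs1.subspace_UNIV] by blast
qed

lemma subalgebra_fixed_points_hom:
  assumes lin: "Vector_Spaces.linear smul smul f"
    and hom: "\<And>x y. f (mult x y) = mult (f x) (f y)"
  shows "subalgebra smul mult {x. f x = x}"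
  unfolding subalgebra_def using subspace_fixed_points[OF lin] hom by simp

theorem proposition3p5:
  fixes smul :: "'k::field \<Rightarrow> 'v::ab_group_add \<Rightarrow> 'v"
    and mult :: "'v \<Rightarrow> 'v \<Rightarrow> 'v"
    and c :: 'v
  assumes alg: "comm_fd_algebra smul mult"
    and med: "medial mult"
    and char2: "(2::'k) \<noteq> 0" and char3: "(3::'k) \<noteq> 0"
    and c_idem: "idempotent_elt mult c" and c_nz: "c \<noteq> 0"
  shows "(\<forall>x y. mult c (mult x y) = mult (mult c x) (mult c y))
    \<and> eigenspace_L smul mult c 0 = {x. mult c x = 0}
    \<and> ideal_alg smul mult (eigenspace_L smul mult c 0)
    \<and> subalgebra smul mult (range (mult c))
    \<and> eigenspace_L smul mult c 1 = {x. mult c x = x}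
    \<and> eigenspace_L smul mult c 1 \<subseteq> range (mult c)
    \<and> subalgebra smul mult (eigenspace_L smul mult c 1)
    \<and> vector_space.dim smul (eigenspace_L smul mult c 1) \<ge> 1
    \<and> (\<forall>c1 c2. idempotent_elt mult c1 \<and> c1 \<noteq> 0 \<and> idempotent_elt mult c2 \<and> c2 \<noteq> 0 \<longrightarrow>
          (\<forall>x. mult c2 (mult c1 x) = mult (mult c2 c1) (mult c2 x)))"
proof -
  have lin_mult: "\<And>a. Vector_Spaces.linear smul smul (mult a)"
    using alg unfolding comm_fd_algebra_def by blast
  obtain B where "finite_dimensional_vector_space smul B"
    using comm_fd_algebra_finite_dimensional[OF alg] .
  then interpret fd: finite_dimensional_vector_space smul B .
  have hom: "\<And>x y. mult c (mult x y) = mult (mult c x) (mult c y)"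
    using medial_idempotent_left_mult_hom[OF med c_idem] .
  have E0: "eigenspace_L smul mult c 0 = {x. mult c x = 0}"
    and E1: "eigenspace_L smul mult c 1 = {x. mult c x = x}"
    unfolding eigenspace_L_def by simp_all
  have "c \<in> {x. mult c x = x}"
    using c_idem unfolding idempotent_elt_def by simp
  then have "vector_space.dim smul {x. mult c x = x} \<ge> 1"
    using c_nz by (rule fd.dim_ge_1_if_nonzero_mem)
  moreover have "{x. mult c x = x} \<subseteq> range (mult c)"
    by (blast intro: range_eqI sym)
  (* Without the explicit instantiations, OF would first unify hom against the
     higher-order pattern f (mult x y), which does not terminate. *)
  ultimately show ?thesis
    unfolding E0 E1
    using hom ideal_alg_kernel_hom[of smul mult "mult c", OF alg lin_mult hom]
      subalgebra_range_hom[of smul "mult c" mult, OF lin_mult hom]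
      subalgebra_fixed_points_hom[of smul "mult c" mult, OF lin_mult hom]
      medial_idempotent_left_mult_comp[OF med]
    by blast
qed

end
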